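(* Let $\mathcal{X},\mathcal{Y}$ be finite sets, $p(Y|X)$ a channel from $\mathcal{X}$ to $\mathcal{Y}$, and $p(X)$ a fully supported distribution on $\mathcal{X}$ such that $p(y)=\sum_x p(y|x)p(x)$ is uniform on $\mathcal{Y}$; let $p(x,y)=p(x)p(y|x)$. Then for bijections $\sigma$ of $\mathcal{X}$ and $\tau$ of $\mathcal{Y}$, $(\sigma,\tau)$ belongs to the equivariance group $G_{p(Y|X)}$ if and only if $(x,y)\sim(\sigma(x),\tau(y))$ for all $(x,y)\in\mathcal{X}\times\mathcal{Y}$.
   Context: $G_{p(Y|X)}$ is the set of pairs of bijections $(\sigma,\tau)$ with $p(Y|X)\circ\sigma=\tau\circ p(Y|X)$ as channels, i.e. $p(y|\sigma(x))=p(\tau^{-1}(y)|x)$ for all $x,y$. The relation $(x,y)\sim(x',y')$ holds iff $\frac{p(x,y)}{p(x)p(y)}=\frac{p(x',y')}{p(x')p(y')}$. *)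

theory Defs
  imports Complex_Main
begin

text \<open>A channel p(Y|X) from a finite type 'x to a finite type 'y is a function
  W with W x y = p(y|x): nonnegative entries, each row summing to 1.\<close>
definition channel :: "('x::finite \<Rightarrow> 'y::finite \<Rightarrow> real) \<Rightarrow> bool" where
  "channel W \<longleftrightarrow> (\<forall>x y. W x y \<ge> 0) \<and> (\<forall>x. (\<Sum>y\<in>UNIV. W x y) = 1)"

definition distribution :: "('a::finite \<Rightarrow> real) \<Rightarrow> bool" where
  "distribution p \<longleftrightarrow> (\<forall>a. p a \<ge> 0) \<and> (\<Sum>a\<in>UNIV. p a) = 1"

definition out_dist :: "('x::finite \<Rightarrow> 'y \<Rightarrow> real) \<Rightarrow> ('x \<Rightarrow> real) \<Rightarrow> 'y \<Rightarrow> real" where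
  "out_dist W p y = (\<Sum>x\<in>UNIV. W x y * p x)"

definition joint :: "('x \<Rightarrow> 'y \<Rightarrow> real) \<Rightarrow> ('x \<Rightarrow> real) \<Rightarrow> 'x \<Rightarrow> 'y \<Rightarrow> real" where
  "joint W p x y = p x * W x y"

definition equiv_group :: "('x::finite \<Rightarrow> 'y::finite \<Rightarrow> real) \<Rightarrow> (('x \<Rightarrow> 'x) \<times> ('y \<Rightarrow> 'y)) set" where
  "equiv_group W = {(\<sigma>, \<tau>). bij \<sigma> \<and> bij \<tau> \<and> (\<forall>x y. W (\<sigma> x) y = W x (inv \<tau> y))}"

definition pmi_rel :: "('x::finite \<Rightarrow> 'y::finite \<Rightarrow> real) \<Rightarrow> ('x \<Rightarrow> real) \<Rightarrow> 'x \<times> 'y \<Rightarrow> 'x \<times> 'y \<Rightarrow> bool" where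
  "pmi_rel W p xy xy' \<longleftrightarrow>
     (case xy of (x, y) \<Rightarrow> case xy' of (x', y') \<Rightarrow>
        joint W p x y / (p x * out_dist W p y) = joint W p x' y' / (p x' * out_dist W p y'))"

end

theory Submission
  imports Defs
begin

text \<open>When p(x) > 0 and p(y) is uniform, the ratio p(x,y)/(p(x)p(y)) equals |Y| p(y|x), so
  (x,y) \<sim> (x',y') just compares channel entries. Substituting y := \<tau> y turns the
  equivariance condition p(y|\<sigma> x) = p(\<tau>\<inverse> y|x) into p(\<tau> y|\<sigma> x) = p(y|x).\<close>

lemma joint_div_marginals:
  assumes "p x \<noteq> 0"
  shows "joint W p x y / (p x * out_dist W p y) = W x y / out_dist W p y"
  using assms unfolding joint_def by simp

lemma pmi_rel_iff_channel_eq: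
  assumes "p x \<noteq> 0" and "p x' \<noteq> 0"
    and "out_dist W p y = out_dist W p y'" and "out_dist W p y \<noteq> 0"
  shows "pmi_rel W p (x, y) (x', y') \<longleftrightarrow> W x y = W x' y'"
  using assms by (simp add: pmi_rel_def joint_div_marginals)

lemma equiv_group_iff_channel_invariant:
  assumes "bij \<sigma>" and "bij \<tau>"
  shows "(\<sigma>, \<tau>) \<in> equiv_group W \<longleftrightarrow> (\<forall>x y. W x y = W (\<sigma> x) (\<tau> y))"
proof -
  have "(\<forall>x y. W (\<sigma> x) y = W x (inv \<tau> y)) \<longleftrightarrow> (\<forall>x y. W (\<sigma> x) (\<tau> y) = W x y)"
    using assms(2) by (metis bij_inv_eq_iff)
  then show ?thesis
    using assms unfolding equiv_group_def by auto
qed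

theorem proposition16:
  fixes W :: "'x::finite \<Rightarrow> 'y::finite \<Rightarrow> real"
    and p :: "'x \<Rightarrow> real"
    and \<sigma> :: "'x \<Rightarrow> 'x" and \<tau> :: "'y \<Rightarrow> 'y"
  assumes "channel W"
    and "distribution p"
    and "\<forall>x. p x > 0"
    and "\<forall>y. out_dist W p y = 1 / real (card (UNIV :: 'y set))"
    and "bij \<sigma>" and "bij \<tau>"
  shows "(\<sigma>, \<tau>) \<in> equiv_group W \<longleftrightarrow> (\<forall>x y. pmi_rel W p (x, y) (\<sigma> x, \<tau> y))"
proof -
  have "out_dist W p y \<noteq> 0" for y
    using assms(4) by (simp add: finite_UNIV_card_ge_0)
  then have "pmi_rel W p (x, y) (\<sigma> x, \<tau> y) \<longleftrightarrow> W x y = W (\<sigma> x) (\<tau> y)" for x y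
    using assms(3,4) by (intro pmi_rel_iff_channel_eq) (auto simp: less_imp_neq[symmetric])
  then show ?thesis
    using equiv_group_iff_channel_invariant[OF assms(5,6)] by simp
qed

end
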